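(* Let $K$ be a field, $\mathcal{H}$ a simple hypergraph on $\{x_1,\dots,x_n\}$ with edges $S_1,\dots,S_m$, $R=K[x_1,\dots,x_n]$, let $i,j$ be integers and let $\mathcal{B}_{i,j}$ be the set of basis elements $\overline{e_{\ell_1,\dots,\ell_i}}$ of $\overline{T}_i$ with $\overline{e_{\ell_1,\dots,\ell_i}}\in\mathrm{Ker}\,\overline{\partial}_i\setminus\mathrm{Im}\,\overline{\partial}_{i+1}$ and $|\bigcup_{k=1}^iS_{\ell_k}|=j$. (1) If for all pairwise distinct edges $E_1,\dots,E_i$ of $\mathcal{H}$ (in any order) with $|\bigcup_{\ell=1}^iE_\ell|=j$ we have $E_1\nsubseteq\bigcup_{\ell=2}^iE_\ell$, then $\{e+\mathrm{Im}\,\overline{\partial}_{i+1}: e\in\mathcal{B}_{i,j}\}$ generates $(\mathrm{Ker}\,\overline{\partial}_i/\mathrm{Im}\,\overline{\partial}_{i+1})_j$ over $K$, and hence $\beta_{i,j}(R/I(\mathcal{H}))\le|\mathcal{B}_{i,j}|$. (2) If for all pairwise distinct edges $E_1,\dots,E_{i+1}$ of $\mathcal{H}$ with $E_{i+1}\subseteq\bigcup_{\ell=1}^iE_\ell$ and $|\bigcup_{\ell=1}^iE_\ell|=j$ we have $E_k\nsubseteq\bigcup_{1\le\ell\le i+1,\ell\neq k}E_\ell$ for all $1\le k\le i$, then $\{e+\mathrm{Im}\,\overline{\partial}_{i+1}: e\in\mathcal{B}_{i,j}\}$ is linearly independent over $K$ in $(\mathrm{Ker}\,\overline{\partial}_i/\mathrm{Im}\,\overline{\partial}_{i+1})_j$,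 and hence $\beta_{i,j}(R/I(\mathcal{H}))\ge|\mathcal{B}_{i,j}|$. (3) If the hypotheses of both (1) and (2) hold, then $\beta_{i,j}(R/I(\mathcal{H}))=|\mathcal{B}_{i,j}|$. In particular this equality holds when $j=ti$, where $t=\max\{|S|:S\in\mathcal{E}(\mathcal{H})\}$.
   Context: A simple hypergraph $\mathcal{H}$ on $\{x_1,\dots,x_n\}$ is a set $\mathcal{E}(\mathcal{H})$ of subsets (edges) of cardinality at least $2$, none contained in another; $I(\mathcal{H})=\langle \prod_{x\in S}x : S\in\mathcal{E}(\mathcal{H})\rangle\subseteq R$, $R$ standard graded, $\beta_{i,j}(R/I)=\dim_K\mathrm{Tor}_i^R(R/I,K)_j$. With edges ordered $S_1,\dots,S_m$, let $\overline{T}_0=K$ and for $i\ge1$ let $\overline{T}_i$ be the $K$-vector space with basis $\overline{e_{\ell_1,\dots,\ell_i}}$, $1\le\ell_1<\dots<\ell_i\le m$, where $\overline{e_{\ell_1,\dots,\ell_i}}$ has degree $|\bigcup_{t=1}^iS_{\ell_t}|$, with differential $\overline{\partial}_i(\overline{e_{\ell_1,\dots,\ell_i}})=\sum_{k:\,S_{\ell_k}\subseteq\bigcup_{t\neq k}S_{\ell_t}}(-1)^k\,\overline{e_{\ell_1,\dots,\widehat{\ell_k},\dots,\ell_i}}$ (this is the Taylor resolution of $R/I(\mathcal{H})$ tensored with $K=R/\langle x_1,\dots,x_n\rangle$), so that $\beta_{i,j}(R/I(\mathcal{H}))=\dim_K(\mathrm{Ker}\,\overline{\partial}_i/\mathrm{Im}\,\overline{\partial}_{i+1})_j$.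 *)

theory Defs
  imports Complex_Main "HOL-Library.Function_Algebras"
begin

text \<open>Vertices are the natural numbers 1..n (standing for x_1..x_n); the edges
  are S 1, ..., S m. Elements of the chain spaces are finitely supported
  K-valued functions on index sets L = {l_1 < ... < l_i}; the function
  ind L is the basis element e_L.\<close>

definition simple_hypergraph :: "nat \<Rightarrow> nat \<Rightarrow> (nat \<Rightarrow> nat set) \<Rightarrow> bool" where
  "simple_hypergraph n m S \<longleftrightarrow>
     inj_on S {1..m} \<and>
     (\<forall>l\<in>{1..m}. S l \<subseteq> {1..n} \<and> 2 \<le> card (S l)) \<and>
     (\<forall>l\<in>{1..m}. \<forall>l'\<in>{1..m}. l \<noteq> l' \<longrightarrow> \<not> S l \<subseteq> S l')"

definition scalef :: "'k::field \<Rightarrow> (nat set \<Rightarrow> 'k) \<Rightarrow> (nat set \<Rightarrow> 'k)" where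
  "scalef a f = (\<lambda>L. a * f L)"

definition ind :: "nat set \<Rightarrow> (nat set \<Rightarrow> 'k::field)" where
  "ind L = (\<lambda>M. if M = L then 1 else 0)"

definition tdeg :: "(nat \<Rightarrow> nat set) \<Rightarrow> nat set \<Rightarrow> nat" where
  "tdeg S L = card (\<Union>l\<in>L. S l)"

definition idx :: "nat \<Rightarrow> nat \<Rightarrow> nat set set" where
  "idx m i = {L. L \<subseteq> {1..m} \<and> card L = i}"

definition idxdeg :: "nat \<Rightarrow> (nat \<Rightarrow> nat set) \<Rightarrow> nat \<Rightarrow> nat \<Rightarrow> nat set set" where
  "idxdeg m S i j = {L \<in> idx m i. tdeg S L = j}"

definition Tsp :: "nat \<Rightarrow> nat \<Rightarrow> (nat set \<Rightarrow> 'k::field) set" where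
  "Tsp m i = {c. \<forall>L. c L \<noteq> 0 \<longrightarrow> L \<in> idx m i}"

definition Tdeg :: "nat \<Rightarrow> (nat \<Rightarrow> nat set) \<Rightarrow> nat \<Rightarrow> nat \<Rightarrow> (nat set \<Rightarrow> 'k::field) set" where
  "Tdeg m S i j = {c. \<forall>L. c L \<noteq> 0 \<longrightarrow> L \<in> idxdeg m S i j}"

text \<open>position of l in the increasingly ordered set L (1-based)\<close>
definition pos :: "nat set \<Rightarrow> nat \<Rightarrow> nat" where
  "pos L l = card {l'\<in>L. l' \<le> l}"

definition bdry :: "(nat \<Rightarrow> nat set) \<Rightarrow> nat set \<Rightarrow> (nat set \<Rightarrow> 'k::field)" where
  "bdry S L = (\<Sum>l\<in>{l\<in>L. S l \<subseteq> (\<Union>l'\<in>L - {l}. S l')}.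
                  scalef ((-1) ^ pos L l) (ind (L - {l})))"

definition dif :: "nat \<Rightarrow> (nat \<Rightarrow> nat set) \<Rightarrow> nat \<Rightarrow> (nat set \<Rightarrow> 'k::field) \<Rightarrow> (nat set \<Rightarrow> 'k)" where
  "dif m S i c = (\<Sum>L\<in>idx m i. scalef (c L) (bdry S L))"

definition Kerj :: "nat \<Rightarrow> (nat \<Rightarrow> nat set) \<Rightarrow> nat \<Rightarrow> nat \<Rightarrow> (nat set \<Rightarrow> 'k::field) set" where
  "Kerj m S i j = {c \<in> Tdeg m S i j. dif m S i c = 0}"

definition Imj :: "nat \<Rightarrow> (nat \<Rightarrow> nat set) \<Rightarrow> nat \<Rightarrow> nat \<Rightarrow> (nat set \<Rightarrow> 'k::field) set" where
  "Imj m S i j = dif m S (i + 1) ` Tsp m (i + 1) \<inter> Tdeg m S i j"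

text \<open>beta_{i,j}(R/I(H)) = dim_K (Ker d_i / Im d_{i+1})_j
   = dim_K (Ker d_i)_j - dim_K (Im d_{i+1})_j\<close>
definition betti :: "'k::field itself \<Rightarrow> nat \<Rightarrow> (nat \<Rightarrow> nat set) \<Rightarrow> nat \<Rightarrow> nat \<Rightarrow> nat" where
  "betti _ m S i j =
     vector_space.dim (scalef :: 'k \<Rightarrow> _) (Kerj m S i j :: (nat set \<Rightarrow> 'k) set)
     - vector_space.dim (scalef :: 'k \<Rightarrow> _) (Imj m S i j :: (nat set \<Rightarrow> 'k) set)"

text \<open>the set B_{i,j} (as index sets L with e_L in Ker \ Im, degree j)\<close>
definition Bset :: "'k::field itself \<Rightarrow> nat \<Rightarrow> (nat \<Rightarrow> nat set) \<Rightarrow> nat \<Rightarrow> nat \<Rightarrow> nat set set" where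
  "Bset _ m S i j = {L \<in> idxdeg m S i j.
      (ind L :: nat set \<Rightarrow> 'k) \<in> Kerj m S i j \<and>
      (ind L :: nat set \<Rightarrow> 'k) \<notin> dif m S (i + 1) ` Tsp m (i + 1)}"

end

theory Submission
  imports Defs "HOL-Combinatorics.Transposition"
begin

(* In degree j the chain space T_i has the basis vectors e_L with |L| = i and |S_L| = j, where
   S_L is the union of the edges indexed by L, and the differential of e_L only involves the
   edges of L that are covered by the other edges of L.

   Under (1) no edge of such an L is covered, so every e_L of degree j is a cycle; those outside
   B_{i,j} are boundaries by definition, hence Ker = span B_{i,j} + Im in degree j, and counting
   dimensions gives beta_{i,j} <= |B_{i,j}|.

   Under (2), whenever the differential of some e_L' has a nonzero coefficient at e_L, the
   removed edge l is the only covered edge of L' = L + {l}; so that differential is +-e_L, and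
   no edge of L is covered.  Thus Im in degree j is spanned by basis vectors e_L which are
   cycles and boundaries, hence not in B_{i,j}.  Every element of Im vanishes on B_{i,j}, which
   gives independence modulo Im and beta_{i,j} >= |B_{i,j}|.

   If j = t i, the union of the i edges of L has the maximal size t i, so these edges are
   pairwise disjoint; this excludes the covered edges forbidden by (1) and (2). *)

section \<open>The chain spaces\<close>

lemma sum_fun_apply: "(\<Sum>x\<in>A. f x) y = (\<Sum>x\<in>A. f x y)"
  by (induction A rule: infinite_finite_induct) auto

lemma scalef_apply [simp]: "scalef a f L = a * f L"
  by (simp add: scalef_def)

lemma ind_apply: "ind L M = (if M = L then 1 else 0)"
  by (simp add: ind_def)

interpretation V: vector_space "scalef :: 'k::field \<Rightarrow> (nat set \<Rightarrow> 'k) \<Rightarrow> _"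
  by unfold_locales (auto simp: scalef_def fun_eq_iff algebra_simps)

lemma finite_idx: "finite (idx m i)"
  by (rule finite_subset[of _ "Pow {1..m}"]) (auto simp: idx_def)

lemma idxdeg_subset_idx: "idxdeg m S i j \<subseteq> idx m i"
  by (auto simp: idxdeg_def)

lemma finite_idxdeg: "finite (idxdeg m S i j)"
  using finite_idx idxdeg_subset_idx by (rule finite_subset[rotated])

lemma dif_apply: "dif m S p c M = (\<Sum>L\<in>idx m p. c L * bdry S L M)"
  by (simp add: dif_def sum_fun_apply)

lemma linear_dif: "Vector_Spaces.linear scalef scalef (dif m S p :: (nat set \<Rightarrow> 'k::field) \<Rightarrow> _)"
  unfolding Vector_Spaces.linear_iff
  by (simp add: V.vector_space_axioms fun_eq_iff dif_apply distrib_right sum.distrib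
      sum_distrib_left mult.assoc)

lemma subspace_Tsp: "V.subspace (Tsp m p :: (nat set \<Rightarrow> 'k::field) set)"
  unfolding V.subspace_def Tsp_def by (auto, metis add.right_neutral)

lemma subspace_Tdeg: "V.subspace (Tdeg m S i j :: (nat set \<Rightarrow> 'k::field) set)"
  unfolding V.subspace_def Tdeg_def by (auto, metis add.right_neutral)

lemma subspace_boundaries: "V.subspace (dif m S p ` Tsp m p :: (nat set \<Rightarrow> 'k::field) set)"
  using module_hom.subspace_image[OF linear_dif[folded module_hom_iff_linear] subspace_Tsp] .

lemma subspace_Imj: "V.subspace (Imj m S i j :: (nat set \<Rightarrow> 'k::field) set)"
  unfolding Imj_def by (intro V.subspace_inter subspace_boundaries subspace_Tdeg)

lemma Kerj_subset_Tdeg: "Kerj m S i j \<subseteq> Tdeg m S i j"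
  by (auto simp: Kerj_def)

lemma Imj_subset_Tdeg: "Imj m S i j \<subseteq> Tdeg m S i j"
  by (auto simp: Imj_def)

lemma dif_ind:
  assumes "L \<in> idx m p"
  shows "dif m S p (ind L) = (bdry S L :: nat set \<Rightarrow> 'k::field)"
proof
  fix M
  have "dif m S p (ind L) M = (\<Sum>L'\<in>idx m p. if L' = L then bdry S L M else 0)"
    unfolding dif_apply by (rule sum.cong) (auto simp: ind_apply)
  also have "\<dots> = bdry S L M"
    using assms finite_idx by simp
  finally show "dif m S p (ind L) M = bdry S L M" .
qed

lemma ind_in_Tsp: "L \<in> idx m p \<Longrightarrow> ind L \<in> Tsp m p"
  by (simp add: Tsp_def ind_apply)

lemma ind_in_Tdeg: "L \<in> idxdeg m S i j \<Longrightarrow> ind L \<in> Tdeg m S i j"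
  by (simp add: Tdeg_def ind_apply)

lemma ind_in_Kerj_iff:
  assumes "L \<in> idxdeg m S i j"
  shows "(ind L :: nat set \<Rightarrow> 'k::field) \<in> Kerj m S i j \<longleftrightarrow> bdry S L = (0 :: nat set \<Rightarrow> 'k)"
proof -
  have "L \<in> idx m i" using assms idxdeg_subset_idx by blast
  then show ?thesis using assms by (simp add: Kerj_def ind_in_Tdeg dif_ind)
qed

lemma sum_ind_apply:
  assumes "finite A" "M \<in> A"
  shows "(\<Sum>L\<in>A. scalef (c L) (ind L)) M = (c M :: 'k::field)"
proof -
  have "(\<Sum>L\<in>A. scalef (c L) (ind L)) M = (\<Sum>L\<in>A. if L = M then c M else 0)"
    unfolding sum_fun_apply by (rule sum.cong) (auto simp: ind_apply)
  then show ?thesis using assms by simp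
qed

lemma Tdeg_expand:
  assumes "c \<in> Tdeg m S i j"
  shows "c = (\<Sum>L\<in>idxdeg m S i j. scalef (c L) (ind L :: nat set \<Rightarrow> 'k::field))"
proof
  fix M
  show "c M = (\<Sum>L\<in>idxdeg m S i j. scalef (c L) (ind L)) M"
  proof (cases "M \<in> idxdeg m S i j")
    case True
    then show ?thesis by (simp add: sum_ind_apply finite_idxdeg)
  next
    case False
    then have "c M = 0" using assms by (auto simp: Tdeg_def)
    moreover have "(\<Sum>L\<in>idxdeg m S i j. scalef (c L) (ind L)) M = 0"
      using False by (auto simp: sum_fun_apply ind_apply intro!: sum.neutral)
    ultimately show ?thesis by simp
  qed
qed

lemma Tdeg_subset_span: "Tdeg m S i j \<subseteq> V.span (ind ` idxdeg m S i j :: (nat set \<Rightarrow> 'k::field) set)"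
proof
  fix c :: "nat set \<Rightarrow> 'k"
  assume "c \<in> Tdeg m S i j"
  then have "c = (\<Sum>L\<in>idxdeg m S i j. scalef (c L) (ind L))" by (rule Tdeg_expand)
  also have "\<dots> \<in> V.span (ind ` idxdeg m S i j)"
    by (intro V.span_sum V.span_scale V.span_base) auto
  finally show "c \<in> V.span (ind ` idxdeg m S i j)" .
qed

lemma inj_ind: "inj (ind :: nat set \<Rightarrow> nat set \<Rightarrow> 'k::field)"
  by (rule injI) (metis ind_apply one_neq_zero)

lemma card_image_ind: "card (ind ` A :: (nat set \<Rightarrow> 'k::field) set) = card A"
  by (rule card_image) (rule inj_on_subset[OF inj_ind], simp)

lemma independent_ind: "finite A \<Longrightarrow> V.independent (ind ` A :: (nat set \<Rightarrow> 'k::field) set)"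
proof (rule V.independent_if_scalars_zero)
  fix f :: "(nat set \<Rightarrow> 'k) \<Rightarrow> 'k" and x :: "nat set \<Rightarrow> 'k"
  assume A: "finite A" and zero: "(\<Sum>x\<in>ind ` A. scalef (f x) x) = 0" and "x \<in> ind ` A"
  then obtain L where L: "L \<in> A" "x = ind L" by auto
  have "(\<Sum>x\<in>ind ` A. scalef (f x) x) = (\<Sum>M\<in>A. scalef (f (ind M)) (ind M))"
    by (simp add: sum.reindex inj_on_subset[OF inj_ind])
  then show "f x = 0"
    using zero sum_ind_apply[OF A L(1), of "f \<circ> ind"] L by simp
qed simp

lemma dim_le_card_ind:
  assumes "finite A" "U \<subseteq> V.span (ind ` A)"
  shows "V.dim (U :: (nat set \<Rightarrow> 'k::field) set) \<le> card A"
  using V.dim_le_card[OF assms(2)] assms(1) by (simp add: card_image_ind)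

(* The bound by Tdeg makes U finite-dimensional; otherwise V.dim U would be the junk value 0. *)
lemma card_le_dim_ind:
  assumes "finite A" "ind ` A \<subseteq> U" "U \<subseteq> Tdeg m S i j"
  shows "card A \<le> V.dim (U :: (nat set \<Rightarrow> 'k::field) set)"
proof -
  obtain B where B: "B \<subseteq> U" "V.independent B" "U \<subseteq> V.span B" "card B = V.dim U"
    by (rule V.basis_exists)
  have "finite B"
    using V.independent_span_bound[OF _ B(2)] B(1) assms(3) Tdeg_subset_span finite_idxdeg
    by (meson finite_imageI order_trans)
  then have "card (ind ` A :: (nat set \<Rightarrow> 'k) set) \<le> card B"
    using V.independent_span_bound[OF _ independent_ind[OF assms(1)]] assms(2) B(3) by blast
  then show ?thesis using B(4) by (simp add: card_image_ind)
qed

section \<open>Covered edges and the differential\<close>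

definition covered :: "(nat \<Rightarrow> nat set) \<Rightarrow> nat set \<Rightarrow> nat \<Rightarrow> bool" where
  "covered S L l \<longleftrightarrow> S l \<subseteq> (\<Union>l'\<in>L - {l}. S l')"

lemma covered_mono: "covered S L l \<Longrightarrow> L \<subseteq> L' \<Longrightarrow> covered S L' l"
  unfolding covered_def by blast

lemma bdry_covered:
  "bdry S L = (\<Sum>l\<in>{l\<in>L. covered S L l}. scalef ((-1) ^ pos L l) (ind (L - {l})))"
  by (simp add: bdry_def covered_def)

lemma bdry_eq_0:
  assumes "\<And>l. l \<in> L \<Longrightarrow> \<not> covered S L l"
  shows "bdry S L = 0"
  unfolding bdry_covered by (rule sum.neutral) (use assms in blast)

lemma bdry_nonzero_obtains:
  assumes "bdry S L M \<noteq> (0::'k::field)"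
  obtains l where "l \<in> L" "covered S L l" "M = L - {l}"
proof -
  obtain l where "l \<in> {l\<in>L. covered S L l}" "(-1::'k) ^ pos L l * ind (L - {l}) M \<noteq> 0"
    using assms unfolding bdry_covered sum_fun_apply scalef_apply
    by (rule sum.not_neutral_contains_not_neutral)
  then show ?thesis using that by (auto simp: ind_apply split: if_splits)
qed

lemma ind_Diff_in_boundaries:
  assumes "L \<in> idx m p" "{l'\<in>L. covered S L l'} = {l}"
  shows "(ind (L - {l}) :: nat set \<Rightarrow> 'k::field) \<in> dif m S p ` Tsp m p"
proof -
  let ?s = "(-1::'k) ^ pos L l"
  have "bdry S L = scalef ?s (ind (L - {l}))"
    unfolding bdry_covered assms(2) by simp
  moreover have "?s * ?s = 1"
    by (simp add: power_mult_distrib[symmetric])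
  ultimately have "ind (L - {l}) = scalef ?s (bdry S L)"
    by (simp add: fun_eq_iff mult.assoc[symmetric])
  also have "\<dots> = scalef ?s (dif m S p (ind L))"
    using assms(1) by (simp add: dif_ind)
  also have "\<dots> \<in> dif m S p ` Tsp m p"
    using assms(1) ind_in_Tsp by (blast intro: V.subspace_scale[OF subspace_boundaries])
  finally show ?thesis .
qed

lemma Bset_subset_idxdeg: "Bset K m S i j \<subseteq> idxdeg m S i j"
  by (auto simp: Bset_def)

lemma ind_in_Imj_if_notin_Bset:
  fixes K :: "'k::field itself"
  assumes "L \<in> idxdeg m S i j" "(ind L :: nat set \<Rightarrow> 'k) \<in> Kerj m S i j" "L \<notin> Bset K m S i j"
  shows "(ind L :: nat set \<Rightarrow> 'k) \<in> Imj m S i j"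
  using assms by (simp add: Bset_def Imj_def ind_in_Tdeg)

section \<open>Upper bound from uncovered edges\<close>

definition no_covered_edge :: "nat \<Rightarrow> (nat \<Rightarrow> nat set) \<Rightarrow> nat \<Rightarrow> nat \<Rightarrow> bool" where
  "no_covered_edge m S i j \<longleftrightarrow> (\<forall>L\<in>idxdeg m S i j. \<forall>l\<in>L. \<not> covered S L l)"

lemma ind_in_Kerj_if_no_covered_edge:
  assumes "no_covered_edge m S i j" "L \<in> idxdeg m S i j"
  shows "(ind L :: nat set \<Rightarrow> 'k::field) \<in> Kerj m S i j"
  using assms by (simp add: ind_in_Kerj_iff bdry_eq_0 no_covered_edge_def)

lemma Kerj_subset_span_Bset_plus_Imj:
  fixes K :: "'k::field itself"
  assumes "no_covered_edge m S i j"
  shows "Kerj m S i j \<subseteq>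
    {a + b | a b. a \<in> V.span ((ind :: nat set \<Rightarrow> nat set \<Rightarrow> 'k) ` Bset K m S i j) \<and> b \<in> Imj m S i j}"
proof
  fix c :: "nat set \<Rightarrow> 'k"
  assume c: "c \<in> Kerj m S i j"
  define D where "D = idxdeg m S i j"
  define B where "B = Bset K m S i j"
  have "B \<subseteq> D" "finite D"
    using Bset_subset_idxdeg[of K m S i j] finite_idxdeg by (simp_all add: B_def D_def)
  have "c \<in> Tdeg m S i j" using c Kerj_subset_Tdeg by blast
  then have "c = (\<Sum>L\<in>D. scalef (c L) (ind L))"
    unfolding D_def by (rule Tdeg_expand)
  also have "\<dots> = (\<Sum>L\<in>D - B. scalef (c L) (ind L)) + (\<Sum>L\<in>B. scalef (c L) (ind L))"
    using \<open>B \<subseteq> D\<close> \<open>finite D\<close> by (rule sum.subset_diff)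
  finally have "c = (\<Sum>L\<in>B. scalef (c L) (ind L)) + (\<Sum>L\<in>D - B. scalef (c L) (ind L))"
    by (simp add: add.commute)
  moreover have "(\<Sum>L\<in>B. scalef (c L) (ind L)) \<in> V.span (ind ` B)"
    by (intro V.span_sum V.span_scale V.span_base) auto
  moreover have "(\<Sum>L\<in>D - B. scalef (c L) (ind L)) \<in> Imj m S i j"
    by (intro V.subspace_sum[OF subspace_Imj] V.subspace_scale[OF subspace_Imj])
      (auto simp: B_def D_def intro!: ind_in_Imj_if_notin_Bset ind_in_Kerj_if_no_covered_edge[OF assms])
  ultimately have "c \<in> {a + b | a b. a \<in> V.span (ind ` B) \<and> b \<in> Imj m S i j}"
    by blast
  then show "c \<in> {a + b | a b. a \<in> V.span (ind ` Bset K m S i j) \<and> b \<in> Imj m S i j}"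
    by (simp only: B_def)
qed

lemma betti_le_card_Bset:
  fixes K :: "'k::field itself"
  assumes "no_covered_edge m S i j"
  shows "betti K m S i j \<le> card (Bset K m S i j)"
proof -
  define D where "D = idxdeg m S i j"
  define B where "B = Bset K m S i j"
  have "B \<subseteq> D" "finite D"
    using Bset_subset_idxdeg[of K m S i j] finite_idxdeg by (simp_all add: B_def D_def)
  have "Kerj m S i j \<subseteq> V.span (ind ` D :: (nat set \<Rightarrow> 'k) set)"
    unfolding D_def using Kerj_subset_Tdeg Tdeg_subset_span by blast
  then have dim_Kerj: "V.dim (Kerj m S i j :: (nat set \<Rightarrow> 'k) set) \<le> card D"
    using \<open>finite D\<close> by (intro dim_le_card_ind)
  have "ind ` (D - B) \<subseteq> (Imj m S i j :: (nat set \<Rightarrow> 'k) set)"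
    by (auto simp: B_def D_def intro!: ind_in_Imj_if_notin_Bset ind_in_Kerj_if_no_covered_edge[OF assms])
  then have dim_Imj: "card (D - B) \<le> V.dim (Imj m S i j :: (nat set \<Rightarrow> 'k) set)"
    using \<open>finite D\<close> Imj_subset_Tdeg[of m S i j] by (intro card_le_dim_ind) auto
  have "card D = card B + card (D - B)"
    using \<open>B \<subseteq> D\<close> \<open>finite D\<close> by (metis card_Diff_subset card_mono finite_subset le_add_diff_inverse)
  with dim_Kerj dim_Imj show ?thesis unfolding betti_def B_def by linarith
qed

section \<open>Lower bound from a unique covered edge\<close>

(* Condition (2) on index sets: E_1, ..., E_i enumerate the edges of L - {l}, and E_(i+1) = S l. *)
definition unique_covered_edge :: "nat \<Rightarrow> (nat \<Rightarrow> nat set) \<Rightarrow> nat \<Rightarrow> nat \<Rightarrow> bool" where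
  "unique_covered_edge m S i j \<longleftrightarrow>
     (\<forall>L\<in>idx m (i + 1). \<forall>l\<in>L. covered S L l \<and> tdeg S (L - {l}) = j \<longrightarrow>
        (\<forall>l'\<in>L - {l}. \<not> covered S L l'))"

lemma boundary_support_ind_in_boundaries_Kerj:
  fixes y :: "nat set \<Rightarrow> 'k::field"
  assumes "unique_covered_edge m S i j" "y \<in> dif m S (i + 1) ` Tsp m (i + 1)"
    and "L \<in> idxdeg m S i j" "y L \<noteq> 0"
  shows "(ind L :: nat set \<Rightarrow> 'k) \<in> dif m S (i + 1) ` Tsp m (i + 1)"
    and "(ind L :: nat set \<Rightarrow> 'k) \<in> Kerj m S i j"
proof -
  obtain x where x: "y = dif m S (i + 1) x" using assms(2) by blast
  obtain L' where L': "L' \<in> idx m (i + 1)" "x L' * bdry S L' L \<noteq> (0::'k)"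
    using assms(4) unfolding x dif_apply by (rule sum.not_neutral_contains_not_neutral)
  then have "bdry S L' L \<noteq> (0::'k)" by auto
  then obtain l where l: "l \<in> L'" "covered S L' l" "L = L' - {l}"
    by (rule bdry_nonzero_obtains)
  have "tdeg S (L' - {l}) = j" using assms(3) l(3) by (simp add: idxdeg_def)
  then have "\<forall>l'\<in>L' - {l}. \<not> covered S L' l'"
    using assms(1) L'(1) l(1,2) unfolding unique_covered_edge_def by blast
  then have others: "\<not> covered S L' l'" if "l' \<in> L" for l'
    using that l(3) by blast
  then have "{l'\<in>L'. covered S L' l'} = {l}" using l by blast
  with L'(1) show "(ind L :: nat set \<Rightarrow> 'k) \<in> dif m S (i + 1) ` Tsp m (i + 1)"
    unfolding l(3) by (rule ind_Diff_in_boundaries)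
  have "\<not> covered S L l'" if "l' \<in> L" for l'
    using others[OF that] covered_mono l(3) by blast
  then show "(ind L :: nat set \<Rightarrow> 'k) \<in> Kerj m S i j"
    using assms(3) bdry_eq_0 by (metis ind_in_Kerj_iff)
qed

lemma Imj_subset_span_ind_boundaries:
  assumes "unique_covered_edge m S i j"
  shows "(Imj m S i j :: (nat set \<Rightarrow> 'k::field) set) \<subseteq>
    V.span (ind ` {L\<in>idxdeg m S i j. (ind L :: nat set \<Rightarrow> 'k) \<in> dif m S (i + 1) ` Tsp m (i + 1)})"
    (is "_ \<subseteq> V.span (ind ` ?P)")
proof
  fix y :: "nat set \<Rightarrow> 'k"
  assume y: "y \<in> Imj m S i j"
  have "y \<in> Tdeg m S i j" using y Imj_subset_Tdeg by blast
  then have "y = (\<Sum>L\<in>idxdeg m S i j. scalef (y L) (ind L))"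
    by (rule Tdeg_expand)
  also have "\<dots> = (\<Sum>L\<in>?P. scalef (y L) (ind L))"
  proof (rule sum.mono_neutral_right[OF finite_idxdeg], blast, rule ballI)
    fix L
    assume L: "L \<in> idxdeg m S i j - ?P"
    then have "y L = 0"
      using y assms boundary_support_ind_in_boundaries_Kerj(1)[of m S i j y L]
      by (auto simp: Imj_def)
    then show "scalef (y L) (ind L) = 0" by (simp add: V.scale_zero_left)
  qed
  also have "\<dots> \<in> V.span (ind ` ?P)"
    by (intro V.span_sum V.span_scale V.span_base) auto
  finally show "y \<in> V.span (ind ` ?P)" .
qed

lemma Imj_vanishes_on_Bset:
  fixes K :: "'k::field itself" and y :: "nat set \<Rightarrow> 'k"
  assumes "unique_covered_edge m S i j" "y \<in> Imj m S i j" "L \<in> Bset K m S i j"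
  shows "y L = 0"
proof (rule ccontr)
  assume "y L \<noteq> 0"
  moreover have "L \<in> idxdeg m S i j" "y \<in> dif m S (i + 1) ` Tsp m (i + 1)"
    using assms(2,3) by (auto simp: Imj_def Bset_def)
  ultimately have "(ind L :: nat set \<Rightarrow> 'k) \<in> dif m S (i + 1) ` Tsp m (i + 1)"
    using assms(1) by (intro boundary_support_ind_in_boundaries_Kerj(1))
  then show False using assms(3) by (simp add: Bset_def)
qed

lemma Bset_independent_modulo_Imj:
  fixes K :: "'k::field itself" and c :: "nat set \<Rightarrow> 'k"
  assumes "unique_covered_edge m S i j"
    and "(\<Sum>L\<in>Bset K m S i j. scalef (c L) (ind L)) \<in> Imj m S i j" "L \<in> Bset K m S i j"
  shows "c L = 0"
proof -
  have "finite (Bset K m S i j)"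
    using Bset_subset_idxdeg finite_idxdeg by (rule finite_subset)
  then show ?thesis
    using Imj_vanishes_on_Bset[OF assms] assms(3) by (simp add: sum_ind_apply)
qed

lemma card_Bset_le_betti:
  fixes K :: "'k::field itself"
  assumes "unique_covered_edge m S i j"
  shows "card (Bset K m S i j) \<le> betti K m S i j"
proof -
  define D where "D = idxdeg m S i j"
  define B where "B = Bset K m S i j"
  define P where "P = {L\<in>D. (ind L :: nat set \<Rightarrow> 'k) \<in> dif m S (i + 1) ` Tsp m (i + 1)}"
  have "finite D" by (simp add: D_def finite_idxdeg)
  have "B \<subseteq> D" "P \<subseteq> D" "B \<inter> P = {}"
    using Bset_subset_idxdeg[of K m S i j] by (auto simp: B_def D_def P_def Bset_def)
  have "finite B" "finite P"
    using \<open>B \<subseteq> D\<close> \<open>P \<subseteq> D\<close> \<open>finite D\<close> finite_subset by auto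
  have dim_Imj: "V.dim (Imj m S i j :: (nat set \<Rightarrow> 'k) set) \<le> card P"
    using \<open>finite P\<close> Imj_subset_span_ind_boundaries[OF assms]
    by (intro dim_le_card_ind) (simp_all add: P_def D_def)
  have "(ind L :: nat set \<Rightarrow> 'k) \<in> Kerj m S i j" if "L \<in> P" for L
  proof -
    have "(ind L :: nat set \<Rightarrow> 'k) L \<noteq> 0" by (simp add: ind_apply)
    then show ?thesis
      using that assms boundary_support_ind_in_boundaries_Kerj(2)[of m S i j "ind L" L]
      by (auto simp: P_def D_def)
  qed
  then have "ind ` (B \<union> P) \<subseteq> (Kerj m S i j :: (nat set \<Rightarrow> 'k) set)"
    by (auto simp: B_def Bset_def)
  then have dim_Kerj: "card (B \<union> P) \<le> V.dim (Kerj m S i j :: (nat set \<Rightarrow> 'k) set)"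
    using \<open>finite B\<close> \<open>finite P\<close> Kerj_subset_Tdeg[of m S i j] by (intro card_le_dim_ind) auto
  have "card (B \<union> P) = card B + card P"
    using \<open>finite B\<close> \<open>finite P\<close> \<open>B \<inter> P = {}\<close> by (rule card_Un_disjoint)
  with dim_Imj dim_Kerj show ?thesis unfolding betti_def B_def by linarith
qed

section \<open>Edge sequences versus index sets\<close>

lemma obtain_bij_betw_with_value:
  assumes "finite A" "card A = p" "a \<in> A" "q \<in> {1..p}"
  obtains h where "bij_betw h {1..p} A" "h q = a"
proof -
  obtain g where g: "bij_betw g {1..p} A"
    using ex_bij_betw_nat_finite_1[OF assms(1)] assms(2) by auto
  then obtain r where r: "r \<in> {1..p}" "g r = a"
    using assms(3) by (auto simp: bij_betw_def)
  have "bij_betw (g \<circ> transpose q r) {1..p} A"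
    by (rule bij_betw_trans[OF _ g]) (use r assms(4) in simp)
  moreover have "(g \<circ> transpose q r) q = a" using r by simp
  ultimately show ?thesis by (rule that)
qed

lemma bij_betw_image_remove:
  "bij_betw h A B \<Longrightarrow> a \<in> A \<Longrightarrow> h ` (A - {a}) = B - {h a}"
  unfolding bij_betw_def inj_on_def by blast

lemma covered_bij_betw:
  assumes "bij_betw h {1..p} L" "q \<in> {1..p}"
  shows "covered S L (h q) \<longleftrightarrow> S (h q) \<subseteq> (\<Union>k\<in>{1..p} - {q}. S (h k))"
proof -
  have "(\<Union>l\<in>L - {h q}. S l) = (\<Union>k\<in>{1..p} - {q}. S (h k))"
    using bij_betw_image_remove[OF assms] by (metis image_image)
  then show ?thesis by (simp add: covered_def)
qed

lemma edge_sequence_of_bij_betw: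
  assumes "simple_hypergraph n m S" "L \<subseteq> {1..m}" "bij_betw h {1..p} L"
  shows "\<forall>k\<in>{1..p}. S (h k) \<in> S ` {1..m}"
    and "inj_on (\<lambda>k. S (h k)) {1..p}"
proof -
  have "h ` {1..p} = L" using assms(3) by (rule bij_betw_imp_surj_on)
  then show "\<forall>k\<in>{1..p}. S (h k) \<in> S ` {1..m}" using assms(2) by blast
  have "inj_on S {1..m}" using assms(1) by (simp add: simple_hypergraph_def)
  then have "inj_on (S \<circ> h) {1..p}"
    using assms(2,3) \<open>h ` {1..p} = L\<close> by (metis bij_betw_def comp_inj_on inj_on_subset)
  then show "inj_on (\<lambda>k. S (h k)) {1..p}" by (simp add: comp_def)
qed

lemma no_covered_edgeI:
  assumes hyp: "simple_hypergraph n m S"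
    and H1: "\<forall>E :: nat \<Rightarrow> nat set.
              (\<forall>k\<in>{1..i}. E k \<in> S ` {1..m}) \<and> inj_on E {1..i} \<and>
              card (\<Union>k\<in>{1..i}. E k) = j \<and> 1 \<le> i \<longrightarrow>
              \<not> E 1 \<subseteq> (\<Union>k\<in>{2..i}. E k)"
  shows "no_covered_edge m S i j"
  unfolding no_covered_edge_def
proof (intro ballI notI)
  fix L l
  assume L: "L \<in> idxdeg m S i j" and "l \<in> L" and cov: "covered S L l"
  have "L \<subseteq> {1..m}" "card L = i" "tdeg S L = j"
    using L by (auto simp: idxdeg_def idx_def)
  then have "finite L" using finite_subset by (metis finite_atLeastAtMost)
  then have "1 \<le> i"
    using \<open>card L = i\<close> \<open>l \<in> L\<close> by (metis One_nat_def Suc_leI card_gt_0_iff empty_iff)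
  then obtain h where h: "bij_betw h {1..i} L" "h 1 = l"
    using obtain_bij_betw_with_value[OF \<open>finite L\<close> \<open>card L = i\<close> \<open>l \<in> L\<close>] by auto
  note E = edge_sequence_of_bij_betw[OF hyp \<open>L \<subseteq> {1..m}\<close> h(1)]
  have "(\<Union>k\<in>{1..i}. S (h k)) = (\<Union>l\<in>L. S l)"
    using bij_betw_imp_surj_on[OF h(1)] by (metis image_image)
  with \<open>tdeg S L = j\<close> have "card (\<Union>k\<in>{1..i}. S (h k)) = j"
    by (simp add: tdeg_def)
  moreover have "S (h 1) \<subseteq> (\<Union>k\<in>{2..i}. S (h k))"
  proof -
    have "{1..i} - {1} = {2..i}" by auto
    with cov show ?thesis
      using covered_bij_betw[OF h(1), of 1 S] \<open>1 \<le> i\<close> h(2) by simp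
  qed
  ultimately show False
    using H1[rule_format, of "\<lambda>k. S (h k)"] E \<open>1 \<le> i\<close> by blast
qed

lemma unique_covered_edgeI:
  assumes hyp: "simple_hypergraph n m S"
    and H2: "\<forall>E :: nat \<Rightarrow> nat set.
              (\<forall>k\<in>{1..i+1}. E k \<in> S ` {1..m}) \<and> inj_on E {1..i+1} \<and>
              E (i+1) \<subseteq> (\<Union>k\<in>{1..i}. E k) \<and>
              card (\<Union>k\<in>{1..i}. E k) = j \<longrightarrow>
              (\<forall>k\<in>{1..i}. \<not> E k \<subseteq> (\<Union>l\<in>{1..i+1} - {k}. E l))"
  shows "unique_covered_edge m S i j"
  unfolding unique_covered_edge_def
proof (intro ballI impI notI)
  fix L l l'
  assume L: "L \<in> idx m (i + 1)" and "l \<in> L" and cov: "covered S L l \<and> tdeg S (L - {l}) = j"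
    and "l' \<in> L - {l}" and cov': "covered S L l'"
  have "L \<subseteq> {1..m}" "card L = i + 1" using L by (auto simp: idx_def)
  then have "finite L" using finite_subset by (metis finite_atLeastAtMost)
  obtain h where h: "bij_betw h {1..i+1} L" "h (i + 1) = l"
    using obtain_bij_betw_with_value[OF \<open>finite L\<close> \<open>card L = i + 1\<close> \<open>l \<in> L\<close>, of "i + 1"] by auto
  note E = edge_sequence_of_bij_betw[OF hyp \<open>L \<subseteq> {1..m}\<close> h(1)]
  have "{1..i+1} - {i + 1} = {1..i}" by auto
  then have "h ` {1..i} = L - {l}"
    using bij_betw_image_remove[OF h(1), of "i + 1"] h(2) by simp
  then have "l' \<in> h ` {1..i}" using \<open>l' \<in> L - {l}\<close> by simp
  then obtain k where k: "k \<in> {1..i}" "h k = l'" by blast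
  have "(\<Union>k\<in>{1..i}. S (h k)) = (\<Union>l'\<in>L - {l}. S l')"
    using \<open>h ` {1..i} = L - {l}\<close> by (metis image_image)
  with cov have "card (\<Union>k\<in>{1..i}. S (h k)) = j"
    by (simp add: tdeg_def)
  moreover have "S (h (i + 1)) \<subseteq> (\<Union>k\<in>{1..i}. S (h k))"
    using cov covered_bij_betw[OF h(1), of "i + 1" S] h(2) \<open>{1..i+1} - {i + 1} = {1..i}\<close> by simp
  ultimately have "\<not> S (h k) \<subseteq> (\<Union>q\<in>{1..i+1} - {k}. S (h q))"
    using H2[rule_format, of "\<lambda>k. S (h k)"] E k(1) by blast
  moreover have "S (h k) \<subseteq> (\<Union>q\<in>{1..i+1} - {k}. S (h q))"
    using cov' covered_bij_betw[OF h(1), of k S] k by simp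
  ultimately show False by blast
qed

section \<open>Index sets of maximal degree\<close>

lemma card_UN_le_card_mult:
  assumes "finite A" "\<And>a. a \<in> A \<Longrightarrow> card (S a) \<le> t"
  shows "card (\<Union>a\<in>A. S a) \<le> card A * t"
proof -
  have "card (\<Union>a\<in>A. S a) \<le> (\<Sum>a\<in>A. card (S a))" by (rule card_UN_le[OF assms(1)])
  also have "\<dots> \<le> card A * t" using sum_bounded_above[of A "\<lambda>a. card (S a)" t] assms(2) by simp
  finally show ?thesis .
qed

lemma disjoint_if_card_UN_eq_card_mult:
  assumes "finite A" "\<And>a. a \<in> A \<Longrightarrow> finite (S a) \<and> card (S a) \<le> t"
    and "card (\<Union>a\<in>A. S a) = card A * t" "a \<in> A"
  shows "S a \<inter> (\<Union>b\<in>A - {a}. S b) = {}"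
proof -
  define U where "U = (\<Union>b\<in>A - {a}. S b)"
  have "finite U" "finite (S a)" "card (S a) \<le> t" using assms by (auto simp: U_def)
  have "card U \<le> card (A - {a}) * t"
    unfolding U_def using assms by (intro card_UN_le_card_mult) auto
  moreover have "card A * t = t + card (A - {a}) * t"
    using card_Suc_Diff1[OF assms(1,4)] by (metis mult_Suc)
  moreover have "card (S a \<union> U) = card A * t"
    using assms(3,4) by (metis U_def UN_insert insert_Diff)
  moreover have "card (S a \<union> U) + card (S a \<inter> U) = card (S a) + card U"
    using \<open>finite (S a)\<close> \<open>finite U\<close> by (rule card_Un_Int[symmetric])
  ultimately have "card (S a \<inter> U) = 0"
    using \<open>card (S a) \<le> t\<close> by linarith
  then show ?thesis using \<open>finite (S a)\<close> by (simp add: U_def)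
qed

lemma edge_finite_card_le_Max:
  assumes "simple_hypergraph n m S" "l \<in> {1..m}"
  shows "finite (S l)" and "card (S l) \<le> Max (card ` S ` {1..m})"
proof -
  show "finite (S l)"
    using assms finite_subset[of "S l" "{1..n}"] by (auto simp: simple_hypergraph_def)
  show "card (S l) \<le> Max (card ` S ` {1..m})" using assms(2) by (intro Max_ge) auto
qed

lemma no_covered_edge_max_degree:
  assumes hyp: "simple_hypergraph n m S" and j: "j = Max (card ` S ` {1..m}) * i"
  shows "no_covered_edge m S i j"
  unfolding no_covered_edge_def
proof (intro ballI notI)
  fix L l
  assume L: "L \<in> idxdeg m S i j" and "l \<in> L" and "covered S L l"
  have "L \<subseteq> {1..m}" "card L = i" "tdeg S L = j" using L by (auto simp: idxdeg_def idx_def)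
  then have "finite L" using finite_subset by (metis finite_atLeastAtMost)
  have "S l \<inter> (\<Union>l'\<in>L - {l}. S l') = {}"
    using \<open>finite L\<close> edge_finite_card_le_Max[OF hyp] \<open>L \<subseteq> {1..m}\<close> \<open>l \<in> L\<close>
      \<open>card L = i\<close> \<open>tdeg S L = j\<close> j
    by (intro disjoint_if_card_UN_eq_card_mult) (auto simp: tdeg_def mult.commute)
  then have "S l = {}" using \<open>covered S L l\<close> by (auto simp: covered_def)
  moreover have "2 \<le> card (S l)"
    using hyp \<open>L \<subseteq> {1..m}\<close> \<open>l \<in> L\<close> by (auto simp: simple_hypergraph_def)
  ultimately show False by simp
qed

lemma unique_covered_edge_max_degree:
  assumes hyp: "simple_hypergraph n m S" and j: "j = Max (card ` S ` {1..m}) * i"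
  shows "unique_covered_edge m S i j"
  unfolding unique_covered_edge_def
proof (intro ballI impI notI)
  fix L l l'
  assume L: "L \<in> idx m (i + 1)" and "l \<in> L" and cov: "covered S L l \<and> tdeg S (L - {l}) = j"
    and l': "l' \<in> L - {l}" and "covered S L l'"
  define M where "M = L - {l}"
  have "L \<subseteq> {1..m}" "card L = i + 1" using L by (auto simp: idx_def)
  then have "finite M" "M \<subseteq> {1..m}" "card M = i"
    using \<open>l \<in> L\<close> finite_subset[of L "{1..m}"] by (auto simp: M_def)
  have disjoint: "S l' \<inter> (\<Union>l''\<in>M - {l'}. S l'') = {}"
    using \<open>finite M\<close> edge_finite_card_le_Max[OF hyp] \<open>M \<subseteq> {1..m}\<close> l' \<open>card M = i\<close> cov j
    by (intro disjoint_if_card_UN_eq_card_mult) (auto simp: M_def tdeg_def mult.commute)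
  have "L - {l'} = insert l (M - {l'})" using \<open>l \<in> L\<close> l' by (auto simp: M_def)
  with \<open>covered S L l'\<close> have "S l' \<subseteq> S l \<union> (\<Union>l''\<in>M - {l'}. S l'')"
    by (simp add: covered_def)
  with disjoint have "S l' \<subseteq> S l" by blast
  moreover have "l \<in> {1..m}" "l' \<in> {1..m}" "l' \<noteq> l"
    using \<open>L \<subseteq> {1..m}\<close> \<open>l \<in> L\<close> l' by auto
  ultimately show False
    using hyp unfolding simple_hypergraph_def by blast
qed

theorem lemma2p2:
  fixes K :: "'k::field itself"
    and n m i j :: nat
    and S :: "nat \<Rightarrow> nat set"
  assumes hyp: "simple_hypergraph n m S"
  defines "B \<equiv> Bset K m S i j"
    and "\<beta> \<equiv> betti K m S i j"
    and "H1 \<equiv> (\<forall>E :: nat \<Rightarrow> nat set.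
              (\<forall>k\<in>{1..i}. E k \<in> S ` {1..m}) \<and> inj_on E {1..i} \<and>
              card (\<Union>k\<in>{1..i}. E k) = j \<and> 1 \<le> i \<longrightarrow>
              \<not> E 1 \<subseteq> (\<Union>k\<in>{2..i}. E k))"
    and "H2 \<equiv> (\<forall>E :: nat \<Rightarrow> nat set.
              (\<forall>k\<in>{1..i+1}. E k \<in> S ` {1..m}) \<and> inj_on E {1..i+1} \<and>
              E (i+1) \<subseteq> (\<Union>k\<in>{1..i}. E k) \<and>
              card (\<Union>k\<in>{1..i}. E k) = j \<longrightarrow>
              (\<forall>k\<in>{1..i}. \<not> E k \<subseteq> (\<Union>l\<in>{1..i+1} - {k}. E l)))"
  shows
    "(H1 \<longrightarrow>
        Kerj m S i j \<subseteq>
          {a + b | a b. a \<in> module.span (scalef :: 'k \<Rightarrow> _) ((ind :: nat set \<Rightarrow> nat set \<Rightarrow> 'k) ` B)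
                       \<and> b \<in> Imj m S i j}
        \<and> \<beta> \<le> card B)
     \<and> (H2 \<longrightarrow>
        (\<forall>c :: nat set \<Rightarrow> 'k.
           (\<Sum>L\<in>B. scalef (c L) (ind L)) \<in> Imj m S i j \<longrightarrow> (\<forall>L\<in>B. c L = 0))
        \<and> card B \<le> \<beta>)
     \<and> (H1 \<and> H2 \<longrightarrow> \<beta> = card B)
     \<and> (j = Max (card ` S ` {1..m}) * i \<longrightarrow> \<beta> = card B)"
proof -
  have cond1: "no_covered_edge m S i j" if H1
    using that unfolding H1_def by (rule no_covered_edgeI[OF hyp])
  have cond2: "unique_covered_edge m S i j" if H2
    using that unfolding H2_def by (rule unique_covered_edgeI[OF hyp])
  have upper: "\<beta> \<le> card B" if "no_covered_edge m S i j"
    unfolding \<beta>_def B_def using that by (rule betti_le_card_Bset)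
  have lower: "card B \<le> \<beta>" if "unique_covered_edge m S i j"
    unfolding \<beta>_def B_def using that by (rule card_Bset_le_betti)
  have "j = Max (card ` S ` {1..m}) * i \<Longrightarrow> \<beta> = card B"
    using upper lower no_covered_edge_max_degree[OF hyp] unique_covered_edge_max_degree[OF hyp]
    by (meson le_antisym)
  moreover have "H1 \<Longrightarrow> Kerj m S i j \<subseteq>
      {a + b | a b. a \<in> module.span scalef ((ind :: nat set \<Rightarrow> nat set \<Rightarrow> 'k) ` B) \<and> b \<in> Imj m S i j}"
    unfolding B_def using cond1 by (rule Kerj_subset_span_Bset_plus_Imj)
  moreover have "H2 \<Longrightarrow> (\<Sum>L\<in>B. scalef (c L) (ind L)) \<in> Imj m S i j \<Longrightarrow> L \<in> B \<Longrightarrow> c L = 0"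
    for c :: "nat set \<Rightarrow> 'k" and L
    unfolding B_def using cond2 by (rule Bset_independent_modulo_Imj)
  ultimately show ?thesis
    using cond1 cond2 upper lower by (meson le_antisym)
qed

end
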